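(* Every finite brace of square-free order is supersoluble.
   Context: A brace (skew left brace) is a set $B$ with two binary operations $+$ and $\cdot$ such that $(B,+)$ and $(B,\cdot)$ are groups and $a(b+c)=ab-a+ac$ for all $a,b,c\in B$; its order is $|B|$. For $a,b\in B$ put $\lambda_a(b)=-a+ab$; $\lambda\colon(B,\cdot)\to\operatorname{Aut}(B,+)$ is a homomorphism. An ideal of $B$ is a subset that is a subgroup of both groups, normal in $(B,+)$ and in $(B,\cdot)$, and invariant under all $\lambda_b$; quotients $B/I$ by ideals are braces. $\operatorname{Soc}(B)=\operatorname{Ker}\lambda\cap Z(B,+)$. A brace $B$ is supersoluble if there is a finite chain of ideals $\{0\}=I_0\le\dots\le I_n=B$ such that for each $i$, either $(I_{i+1}/I_i,+)$ is infinite cyclic and $I_{i+1}/I_i\le\operatorname{Soc}(B/I_i)$, or $I_{i+1}/I_i$ has prime order. *)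

theory Defs
  imports "HOL-Algebra.Algebra" "HOL-Computational_Algebra.Squarefree"
begin

text \<open>A (skew left) brace is given by two group structures A (the additive group (B,+),
written in HOL-Algebra's multiplicative notation) and M (the multiplicative group (B,\<cdot>))
on the same carrier, satisfying a(b+c) = ab - a + ac.\<close>

definition brace :: "'a monoid \<Rightarrow> 'a monoid \<Rightarrow> bool" where
  "brace A M \<longleftrightarrow> group A \<and> group M \<and> carrier M = carrier A \<and>
     (\<forall>a\<in>carrier A. \<forall>b\<in>carrier A. \<forall>c\<in>carrier A.
        a \<otimes>\<^bsub>M\<^esub> (b \<otimes>\<^bsub>A\<^esub> c)
          = (a \<otimes>\<^bsub>M\<^esub> b) \<otimes>\<^bsub>A\<^esub> inv\<^bsub>A\<^esub> a \<otimes>\<^bsub>A\<^esub> (a \<otimes>\<^bsub>M\<^esub> c))"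

definition brace_lambda :: "'a monoid \<Rightarrow> 'a monoid \<Rightarrow> 'a \<Rightarrow> 'a \<Rightarrow> 'a" where
  "brace_lambda A M a b = inv\<^bsub>A\<^esub> a \<otimes>\<^bsub>A\<^esub> (a \<otimes>\<^bsub>M\<^esub> b)"

definition brace_ideal :: "'a monoid \<Rightarrow> 'a monoid \<Rightarrow> 'a set \<Rightarrow> bool" where
  "brace_ideal A M I \<longleftrightarrow> subgroup I A \<and> subgroup I M \<and> I \<lhd> A \<and> I \<lhd> M \<and>
     (\<forall>b\<in>carrier A. \<forall>x\<in>I. brace_lambda A M b x \<in> I)"

text \<open>Elements of the quotient B/I are the additive cosets of I (for an ideal these coincide
with the multiplicative cosets). The factor J/I consists of the cosets of I meeting J.\<close>
definition brace_factor :: "'a monoid \<Rightarrow> 'a set \<Rightarrow> 'a set \<Rightarrow> 'a set set" where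
  "brace_factor A I J = {I #>\<^bsub>A\<^esub> x | x. x \<in> J}"

text \<open>J/I \<le> Soc(B/I), unfolded: for x in J, the class of x is central in (B/I,+) and
lies in the kernel of lambda of B/I.\<close>
definition factor_in_socle :: "'a monoid \<Rightarrow> 'a monoid \<Rightarrow> 'a set \<Rightarrow> 'a set \<Rightarrow> bool" where
  "factor_in_socle A M I J \<longleftrightarrow>
     (\<forall>x\<in>J. \<forall>b\<in>carrier A.
        x \<otimes>\<^bsub>A\<^esub> b \<otimes>\<^bsub>A\<^esub> inv\<^bsub>A\<^esub> x \<otimes>\<^bsub>A\<^esub> inv\<^bsub>A\<^esub> b \<in> I \<and>
        brace_lambda A M x b \<otimes>\<^bsub>A\<^esub> inv\<^bsub>A\<^esub> b \<in> I)"

definition factor_infinite_cyclic :: "'a monoid \<Rightarrow> 'a set \<Rightarrow> 'a set \<Rightarrow> bool" where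
  "factor_infinite_cyclic A I J \<longleftrightarrow> infinite (brace_factor A I J) \<and>
     (\<exists>g\<in>J. \<forall>x\<in>J. \<exists>k::int. I #>\<^bsub>A\<^esub> x = I #>\<^bsub>A\<^esub> (g [^]\<^bsub>A\<^esub> k))"

definition supersoluble_brace :: "'a monoid \<Rightarrow> 'a monoid \<Rightarrow> bool" where
  "supersoluble_brace A M \<longleftrightarrow>
     (\<exists>(I :: nat \<Rightarrow> 'a set) n.
        I 0 = {\<one>\<^bsub>A\<^esub>} \<and> I n = carrier A \<and>
        (\<forall>i\<le>n. brace_ideal A M (I i)) \<and>
        (\<forall>i<n. I i \<subseteq> I (Suc i) \<and>
           ((factor_infinite_cyclic A (I i) (I (Suc i)) \<and> factor_in_socle A M (I i) (I (Suc i)))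
            \<or> Factorial_Ring.prime (card (brace_factor A (I i) (I (Suc i)))))))"

end

theory Submission
  imports Defs "HOL-Number_Theory.Residues"
begin

(* Let p be the smallest prime dividing the order of a finite group G, with p^2 not dividing it.
   Burnside's transfer argument shows that the elements g with g^(|G|/p) = 1 form a subgroup of
   index p. Take x of order p, P = <x>, and let V be the transfer of G into P. Then V x = x^f,
   where f is the number of cosets P t fixed by right multiplication with x: the other cosets fall
   into x-orbits of length p, along which the transfer factors telescope to 1, so f is congruent
   to [G:P] modulo p and hence prime to p. For a fixed coset, t x t^-1 lies in P and hence equals x, because conjugation
   by t acts on P as an automorphism whose order divides both ord t and p - 1, which are coprime.
   So V is onto P, and its kernel is the subgroup in question.

   Now let J be a nonzero ideal of a finite brace of square-free order, p the smallest prime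
   dividing |J| and m = |J|/p. Applied to (J,+) this gives the subgroup K of elements of J whose
   additive order divides m, and |K| = m. Each lambda_b is an additive automorphism preserving J,
   so K is lambda-invariant; since a b = a + lambda_a(b), K is closed under the multiplication,
   so it is a multiplicative subgroup of order m and coincides with the multiplicative complement
   {g in J. g^m = 1}. Both descriptions are invariant under conjugation, so K is an ideal with
   |J/K| = p, and descending from B yields a chain of ideals with factors of prime order. *)

lemma (in group) inv_mult_cancel_left:
  "a \<in> carrier G \<Longrightarrow> b \<in> carrier G \<Longrightarrow> inv a \<otimes> (a \<otimes> b) = b"
  by (simp add: m_assoc[symmetric])

lemma (in group) mult_inv_cancel_left:
  "a \<in> carrier G \<Longrightarrow> b \<in> carrier G \<Longrightarrow> a \<otimes> (inv a \<otimes> b) = b"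
  by (simp add: m_assoc[symmetric])

lemma (in group) conj_nat_pow:
  assumes "a \<in> carrier G" "y \<in> carrier G"
  shows "a \<otimes> y [^] (n::nat) \<otimes> inv a = (a \<otimes> y \<otimes> inv a) [^] n"
proof (induction n)
  case 0
  then show ?case using assms by simp
next
  case (Suc n)
  have "a \<otimes> y [^] Suc n \<otimes> inv a = (a \<otimes> y [^] n \<otimes> inv a) \<otimes> (a \<otimes> y \<otimes> inv a)"
    using assms by (simp add: m_assoc inv_mult_cancel_left)
  then show ?case using Suc by simp
qed

lemma (in group) conj_iterate:
  assumes t: "t \<in> carrier G" and x: "x \<in> carrier G" and tx: "t \<otimes> x \<otimes> inv t = x [^] (k::nat)"
  shows "t [^] j \<otimes> x \<otimes> inv (t [^] j) = x [^] (k ^ j)"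
proof (induction j)
  case 0
  then show ?case using x by simp
next
  case (Suc j)
  have tj: "t [^] j \<in> carrier G" using t by simp
  have "t [^] Suc j \<otimes> x \<otimes> inv (t [^] Suc j) = t [^] j \<otimes> (t \<otimes> x \<otimes> inv t) \<otimes> inv (t [^] j)"
    using t tj x by (simp add: m_assoc inv_mult_group)
  also have "\<dots> = (t [^] j \<otimes> x \<otimes> inv (t [^] j)) [^] k"
    using tx conj_nat_pow tj x by simp
  also have "\<dots> = x [^] (k ^ Suc j)"
    using Suc x by (simp add: nat_pow_pow mult.commute)
  finally show ?case .
qed

lemma (in group) subgroup_nat_pow_card:
  assumes "subgroup H G" "finite H" "g \<in> H"
  shows "g [^] card H = \<one>"
proof -
  interpret H: group "G\<lparr>carrier := H\<rparr>" using subgroup_imp_group[OF assms(1)] .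
  have "g [^]\<^bsub>G\<lparr>carrier := H\<rparr>\<^esub> order (G\<lparr>carrier := H\<rparr>) = \<one>"
    using H.pow_order_eq_1 assms(3) by simp
  then show ?thesis by (simp add: order_def nat_pow_consistent[symmetric])
qed

lemma (in group) finite_subgroupI:
  assumes fin: "finite (carrier G)" and sub: "H \<subseteq> carrier G" and one: "\<one> \<in> H"
    and mult: "\<And>a b. a \<in> H \<Longrightarrow> b \<in> H \<Longrightarrow> a \<otimes> b \<in> H"
  shows "subgroup H G"
proof (rule subgroupI[OF sub])
  show "H \<noteq> {}" using one by auto
  show "\<And>a b. a \<in> H \<Longrightarrow> b \<in> H \<Longrightarrow> a \<otimes> b \<in> H" by (rule mult)
  fix a assume a: "a \<in> H"
  have ac: "a \<in> carrier G" using a sub by auto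
  have powH: "a [^] (n::nat) \<in> H" for n by (induction n) (use one mult a in auto)
  obtain k where k: "order G = Suc k"
    using fin order_gt_0_iff_finite by (metis gr0_conv_Suc)
  have "a [^] k \<otimes> a = \<one>" using pow_order_eq_1[OF ac] k by simp
  then have "inv a = a [^] k" using inv_equality ac by simp
  then show "inv a \<in> H" using powH by simp
qed

lemma (in group) pow_eq_one_normal:
  assumes J: "J \<lhd> G" and K: "subgroup K G" and K_def: "K = {g \<in> J. g [^] (m::nat) = \<one>}"
  shows "K \<lhd> G"
  unfolding normal_inv_iff
proof (intro conjI ballI)
  show "subgroup K G" by (rule K)
  fix x h assume x: "x \<in> carrier G" and h: "h \<in> K"
  have hc: "h \<in> carrier G" using h K subgroup.subset by blast
  have "x \<otimes> h \<otimes> inv x \<in> J" using J x h unfolding K_def normal_inv_iff by auto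
  moreover have "(x \<otimes> h \<otimes> inv x) [^] m = \<one>"
    using conj_nat_pow[OF x hc, of m] h x unfolding K_def by simp
  ultimately show "x \<otimes> h \<otimes> inv x \<in> K" unfolding K_def by simp
qed

lemma (in comm_monoid) finprod_telescope:
  assumes c: "\<And>i. c i \<in> carrier G" and f: "\<And>i. f i \<in> carrier G"
    and step: "\<And>i. f i \<otimes> c (Suc i) = c i"
  shows "finprod G f {..<n} \<otimes> c n = c 0"
proof (induction n)
  case 0
  then show ?case using c by simp
next
  case (Suc n)
  have fin: "f \<in> {..<n} \<rightarrow> carrier G" using f by simp
  have "finprod G f {..<Suc n} = f n \<otimes> finprod G f {..<n}"
    unfolding lessThan_Suc using finprod_insert[OF _ _ fin f] by simp
  then have "finprod G f {..<Suc n} \<otimes> c (Suc n) = finprod G f {..<n} \<otimes> (f n \<otimes> c (Suc n))"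
    using f c fin by (simp add: m_ac)
  also have "\<dots> = c 0" using step Suc by simp
  finally show ?case .
qed

lemma (in group) card_rcosets_mult_card:
  assumes K: "subgroup K G" and J: "subgroup J G" and KJ: "K \<subseteq> J"
  shows "card {K #> x | x. x \<in> J} * card K = card J"
proof -
  interpret J: group "G\<lparr>carrier := J\<rparr>" using subgroup_imp_group[OF J] .
  have "rcosets\<^bsub>G\<lparr>carrier := J\<rparr>\<^esub> K = {K #> x | x. x \<in> J}"
    unfolding RCOSETS_def by (auto simp: r_coset_def)
  then show ?thesis
    using J.lagrange[OF subgroup_incl[OF K J KJ]] by (simp add: order_def)
qed

lemma cong_1_if_pow_cong_1_coprime:
  fixes k e p :: nat
  assumes p: "Factorial_Ring.prime p" and k: "\<not> p dvd k" and e: "e \<noteq> 0"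
    and pow: "[k ^ e = 1] (mod p)" and coprime: "coprime e (p - 1)"
  shows "[k = 1] (mod p)"
proof -
  obtain a b where ab: "e * a = (p - 1) * b + 1"
    using bezout_nat[OF e, of "p - 1"] coprime by auto
  have "[k ^ ((p - 1) * b) = 1] (mod p)"
    using cong_pow[OF fermat_theorem[OF p k], of b] by (simp add: power_mult)
  then have "[k ^ ((p - 1) * b) * k = 1 * k] (mod p)"
    by (rule cong_mult) (rule cong_refl)
  then have "[k ^ (e * a) = k] (mod p)"
    unfolding ab by (simp add: power_add mult.commute)
  moreover have "[k ^ (e * a) = 1] (mod p)"
    using cong_pow[OF pow, of a] by (simp add: power_mult)
  ultimately show ?thesis using cong_sym cong_trans by blast
qed

lemma (in group) coprime_ord_pred_smallest_prime:
  assumes fin: "finite (carrier G)" and t: "t \<in> carrier G" and p: "Factorial_Ring.prime p"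
    and smallest: "\<And>r. Factorial_Ring.prime r \<Longrightarrow> r dvd order G \<Longrightarrow> p \<le> r"
  shows "coprime (ord t) (p - 1)"
proof (rule ccontr)
  assume "\<not> coprime (ord t) (p - 1)"
  then obtain r where r: "Factorial_Ring.prime r" "r dvd ord t" "r dvd p - 1"
    using prime_factor_nat[of "gcd (ord t) (p - 1)"] by (auto simp: coprime_iff_gcd_eq_1)
  then have "r dvd order G"
    using ord_dvd_group_order[OF t] by (meson dvd_trans)
  then have "p \<le> r" using smallest r(1) by simp
  moreover have "r \<le> p - 1"
    using r(3) prime_gt_1_nat[OF p] by (intro dvd_imp_le) auto
  ultimately show False using prime_gt_1_nat[OF p] by simp
qed

section \<open>Orbits of a map of prime period\<close>

lemma funpow_period_mult:
  assumes "(f ^^ p) s = s"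
  shows "(f ^^ (p * q)) s = s"
  by (induction q) (simp_all add: funpow_add assms)

lemma funpow_period_mod:
  assumes "(f ^^ p) s = s"
  shows "(f ^^ k) s = (f ^^ (k mod p)) s"
proof -
  have "(f ^^ k) s = (f ^^ (k mod p + p * (k div p))) s" by simp
  also have "\<dots> = (f ^^ (k mod p)) ((f ^^ (p * (k div p))) s)"
    by (simp only: funpow_add o_apply)
  finally show ?thesis using funpow_period_mult[OF assms] by simp
qed

lemma funpow_mem:
  assumes "f ` U \<subseteq> U" "s \<in> U"
  shows "(f ^^ i) s \<in> U"
  using assms by (induction i) auto

lemma funpow_prime_period_fixpoint:
  assumes p: "Factorial_Ring.prime p" and period: "(f ^^ p) u = u" and d: "(f ^^ d) u = u" "0 < d" "d < p"
  shows "f u = u"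
proof -
  have "coprime d p"
    using p d by (metis coprime_commute nat_dvd_not_less prime_imp_coprime_nat)
  then obtain a b where ab: "d * a = p * b + 1"
    using bezout_nat[of d p] d by auto
  have "u = (f ^^ (d * a)) u" using funpow_period_mult[OF d(1)] by simp
  also have "\<dots> = f ((f ^^ (p * b)) u)" unfolding ab by simp
  also have "\<dots> = f u" using funpow_period_mult[OF period] by simp
  finally show ?thesis by simp
qed

context
  fixes f :: "'a \<Rightarrow> 'a" and U :: "'a set" and p :: nat
  assumes prime_p: "Factorial_Ring.prime p" and maps_to: "f ` U \<subseteq> U"
    and period: "\<And>s. s \<in> U \<Longrightarrow> (f ^^ p) s = s"
    and no_fixpoint: "\<And>s. s \<in> U \<Longrightarrow> f s \<noteq> s"
begin

lemma prime_orbit_inj: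
  assumes s: "s \<in> U"
  shows "inj_on (\<lambda>i. (f ^^ i) s) {..<p}"
proof -
  have False if ij: "i < j" "j < p" and eq: "(f ^^ i) s = (f ^^ j) s" for i j
  proof -
    define u where "u = (f ^^ i) s"
    have u: "u \<in> U" unfolding u_def using funpow_mem[OF maps_to s] .
    have "(f ^^ (j - i)) u = (f ^^ j) s"
      unfolding u_def using ij by (simp flip: o_apply[of "f ^^ (j - i)"] funpow_add)
    then have "(f ^^ (j - i)) u = u" using eq u_def by simp
    then have "f u = u"
      using funpow_prime_period_fixpoint[OF prime_p period[OF u]] ij by simp
    then show False using no_fixpoint u by simp
  qed
  then show ?thesis
    by (intro inj_onI) (metis lessThan_iff linorder_neqE_nat)
qed

lemma prime_orbit:
  assumes s: "s \<in> U"
  defines "Orb \<equiv> (\<lambda>i. (f ^^ i) s) ` {..<p}"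
  shows "card Orb = p" and "Orb \<subseteq> U" and "f ` (U - Orb) \<subseteq> U - Orb"
proof -
  show "card Orb = p"
    unfolding Orb_def using card_image[OF prime_orbit_inj[OF s]] by simp
  show OU: "Orb \<subseteq> U" unfolding Orb_def using funpow_mem[OF maps_to s] by auto
  have p0: "0 < p" using prime_p prime_gt_0_nat by blast
  show "f ` (U - Orb) \<subseteq> U - Orb"
  proof
    fix v assume "v \<in> f ` (U - Orb)"
    then obtain u where u: "u \<in> U" "u \<notin> Orb" and v: "v = f u" by auto
    have "v \<notin> Orb"
    proof
      assume "v \<in> Orb"
      then obtain i where i: "v = (f ^^ i) s" unfolding Orb_def by auto
      have "u = (f ^^ (p - 1 + 1)) u" using period[OF u(1)] p0 by simp
      also have "\<dots> = (f ^^ (p - 1)) (f u)"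
        by (simp only: Suc_eq_plus1[symmetric] funpow_Suc_right o_apply)
      also have "\<dots> = (f ^^ (p - 1)) ((f ^^ i) s)" using i v by simp
      also have "\<dots> = (f ^^ (p - 1 + i)) s" by (simp add: funpow_add)
      also have "\<dots> = (f ^^ ((p - 1 + i) mod p)) s"
        using funpow_period_mod[OF period[OF s]] by simp
      finally have "u \<in> Orb" unfolding Orb_def using p0 by auto
      then show False using u by simp
    qed
    then show "v \<in> U - Orb" using u v maps_to by auto
  qed
qed

end

lemma (in comm_monoid) finprod_prime_orbits:
  assumes "Factorial_Ring.prime p" and "finite U" and "f ` U \<subseteq> U"
    and "\<And>s. s \<in> U \<Longrightarrow> (f ^^ p) s = s" and "\<And>s. s \<in> U \<Longrightarrow> f s \<noteq> s"
    and "g \<in> U \<rightarrow> carrier G"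
    and "\<And>s. s \<in> U \<Longrightarrow> finprod G (\<lambda>i. g ((f ^^ i) s)) {..<p} = \<one>"
  shows "finprod G g U = \<one> \<and> p dvd card U"
  using assms(2-)
proof (induction "card U" arbitrary: U rule: less_induct)
  case less
  show ?case
  proof (cases "U = {}")
    case True
    then show ?thesis by simp
  next
    case False
    then obtain s where s: "s \<in> U" by auto
    define Orb where "Orb = (\<lambda>i. (f ^^ i) s) ` {..<p}"
    note orbit = prime_orbit[OF assms(1) less.prems(2,3,4) s, folded Orb_def]
    have fin_O: "finite Orb" using finite_subset[OF orbit(2) less.prems(1)] .
    have card_U: "card U = card Orb + card (U - Orb)"
      using card_Diff_subset[OF fin_O orbit(2)] card_mono[OF less.prems(1) orbit(2)] by linarith
    have "card (U - Orb) < card U"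
      using card_U orbit(1) prime_gt_0_nat[OF assms(1)] by linarith
    then have IH: "finprod G g (U - Orb) = \<one> \<and> p dvd card (U - Orb)"
      by (rule less.hyps) (use less.prems orbit(3) in auto)
    have "finprod G g Orb = finprod G (\<lambda>i. g ((f ^^ i) s)) {..<p}"
      unfolding Orb_def
      by (rule finprod_reindex)
        (use less.prems(5) orbit(2) prime_orbit_inj[OF assms(1) less.prems(2,3,4) s] in
          \<open>auto simp: Orb_def\<close>)
    also have "\<dots> = \<one>" using less.prems(6) s by simp
    finally have "finprod G g Orb = \<one>" .
    moreover have "finprod G g U = finprod G g Orb \<otimes> finprod G g (U - Orb)"
      using finprod_Un_disjoint[of Orb "U - Orb" g] fin_O less.prems(1,5) orbit(2)
      by (simp add: Un_absorb1 Pi_iff subset_iff)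
    ultimately show ?thesis using IH card_U orbit(1) by simp
  qed
qed

section \<open>The transfer\<close>

locale transfer = group G for G (structure) +
  fixes P :: "'a set"
  assumes finite_carrier: "finite (carrier G)"
    and subgroup_P: "subgroup P G"
    and comm_group_P: "comm_group (G\<lparr>carrier := P\<rparr>)"
begin

abbreviation PG where "PG \<equiv> G\<lparr>carrier := P\<rparr>"

definition rep :: "'a \<Rightarrow> 'a" where
  "rep g = (SOME t. t \<in> P #> g)"

definition transversal :: "'a set" where
  "transversal = rep ` carrier G"

definition transfer_factor :: "'a \<Rightarrow> 'a \<Rightarrow> 'a" where
  "transfer_factor g t = t \<otimes> g \<otimes> inv (rep (t \<otimes> g))"

definition V :: "'a \<Rightarrow> 'a" where
  "V g = finprod PG (transfer_factor g) transversal"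

lemma P_carrier: "P \<subseteq> carrier G"
  using subgroup.subset[OF subgroup_P] .

lemma rep_mem_rcos: "g \<in> carrier G \<Longrightarrow> rep g \<in> P #> g"
  unfolding rep_def by (rule someI) (rule rcos_self[OF _ subgroup_P])

lemma rep_carrier: "g \<in> carrier G \<Longrightarrow> rep g \<in> carrier G"
  using rep_mem_rcos r_coset_subset_G[OF P_carrier] by blast

lemma rcos_rep: "g \<in> carrier G \<Longrightarrow> P #> rep g = P #> g"
  using repr_independence[OF rep_mem_rcos _ subgroup_P] by simp

lemma rep_eq_iff:
  "a \<in> carrier G \<Longrightarrow> b \<in> carrier G \<Longrightarrow> rep a = rep b \<longleftrightarrow> P #> a = P #> b"
  by (metis rcos_rep rep_def)

lemma rep_rep: "g \<in> carrier G \<Longrightarrow> rep (rep g) = rep g"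
  by (simp add: rep_eq_iff rep_carrier rcos_rep)

lemma rep_mult_rep:
  assumes "a \<in> carrier G" "b \<in> carrier G"
  shows "rep (rep a \<otimes> b) = rep (a \<otimes> b)"
  using assms rcos_rep[of a] rep_carrier[of a]
  by (simp add: rep_eq_iff coset_mult_assoc[OF P_carrier, symmetric])

lemma rep_mult_inv_mem: "g \<in> carrier G \<Longrightarrow> rep g \<otimes> inv g \<in> P"
  using subgroup.rcos_module_imp[OF subgroup_P is_group _ rep_mem_rcos] .

lemma transfer_factor_mem:
  assumes "g \<in> carrier G"
  shows "g \<otimes> inv (rep g) \<in> P"
proof -
  have "inv (rep g \<otimes> inv g) \<in> P"
    using subgroup.m_inv_closed[OF subgroup_P rep_mult_inv_mem[OF assms]] .
  then show ?thesis using assms rep_carrier[OF assms] by (simp add: inv_mult_group)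
qed

lemma transversal_carrier: "transversal \<subseteq> carrier G"
  unfolding transversal_def using rep_carrier by auto

lemma rep_transversal: "t \<in> transversal \<Longrightarrow> rep t = t"
  unfolding transversal_def using rep_rep by auto

lemma rep_mem_transversal: "g \<in> carrier G \<Longrightarrow> rep g \<in> transversal"
  unfolding transversal_def by (rule imageI)

lemma finite_transversal: "finite transversal"
  unfolding transversal_def using finite_carrier by simp

lemma card_transversal: "card transversal * card P = order G"
proof -
  have "bij_betw (\<lambda>t. P #> t) transversal (rcosets P)"
  proof (rule bij_betw_imageI)
    show "inj_on (\<lambda>t. P #> t) transversal"
      by (intro inj_onI) (metis rep_eq_iff rep_transversal subsetD[OF transversal_carrier])
    show "(\<lambda>t. P #> t) ` transversal = rcosets P"
      unfolding RCOSETS_def transversal_def using rcos_rep rep_carrier by auto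
  qed
  then have "card transversal = card (rcosets P)" by (rule bij_betw_same_card)
  then show ?thesis using lagrange[OF subgroup_P] by simp
qed

lemma bij_betw_rep_mult:
  assumes g: "g \<in> carrier G"
  shows "bij_betw (\<lambda>t. rep (t \<otimes> g)) transversal transversal"
proof -
  have inj: "inj_on (\<lambda>t. rep (t \<otimes> g)) transversal"
  proof (rule inj_onI)
    fix t t' assume t: "t \<in> transversal" and t': "t' \<in> transversal"
      and eq: "rep (t \<otimes> g) = rep (t' \<otimes> g)"
    have tc: "t \<in> carrier G" and tc': "t' \<in> carrier G" using t t' transversal_carrier by auto
    have "(P #> t \<otimes> g) #> inv g = (P #> t' \<otimes> g) #> inv g"
      using eq tc tc' g by (simp add: rep_eq_iff)
    then have "P #> t = P #> t'"
      using tc tc' g by (simp add: coset_mult_assoc[OF P_carrier] m_assoc)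
    then show "t = t'" using rep_eq_iff tc tc' rep_transversal t t' by metis
  qed
  have "(\<lambda>t. rep (t \<otimes> g)) ` transversal \<subseteq> transversal"
    using rep_mem_transversal transversal_carrier g by auto
  then show ?thesis
    using endo_inj_surj[OF finite_transversal _ inj] inj by (simp add: bij_betw_def)
qed

lemma transfer_factor_PG: "g \<in> carrier G \<Longrightarrow> transfer_factor g \<in> transversal \<rightarrow> carrier PG"
  unfolding transfer_factor_def using transfer_factor_mem transversal_carrier by auto

lemma V_closed:
  assumes "g \<in> carrier G"
  shows "V g \<in> P"
proof -
  interpret PG: comm_group PG by (rule comm_group_P)
  show ?thesis unfolding V_def using PG.finprod_closed[OF transfer_factor_PG[OF assms]] by simp
qed

lemma V_mult:
  assumes g: "g \<in> carrier G" and h: "h \<in> carrier G"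
  shows "V (g \<otimes> h) = V g \<otimes> V h"
proof -
  interpret PG: comm_group PG by (rule comm_group_P)
  define a where "a = transfer_factor g"
  define b where "b = transfer_factor h"
  define \<sigma> where "\<sigma> = (\<lambda>t. rep (t \<otimes> g))"
  have a: "a \<in> transversal \<rightarrow> carrier PG" unfolding a_def using transfer_factor_PG[OF g] .
  have b: "b \<in> transversal \<rightarrow> carrier PG" unfolding b_def using transfer_factor_PG[OF h] .
  have \<sigma>: "bij_betw \<sigma> transversal transversal" unfolding \<sigma>_def using bij_betw_rep_mult[OF g] .
  then have b\<sigma>: "b \<circ> \<sigma> \<in> transversal \<rightarrow> carrier PG"
    using b bij_betwE[OF \<sigma>] by (simp add: Pi_iff)
  have "transfer_factor (g \<otimes> h) t = a t \<otimes> b (\<sigma> t)"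
    if t: "t \<in> transversal" for t
  proof -
    have tc: "t \<in> carrier G" using t transversal_carrier by auto
    have "rep (rep (t \<otimes> g) \<otimes> h) = rep (t \<otimes> (g \<otimes> h))"
      using rep_mult_rep[of "t \<otimes> g" h] tc g h by (simp add: m_assoc)
    then show ?thesis
      unfolding a_def b_def \<sigma>_def transfer_factor_def
      using tc g h rep_carrier[of "t \<otimes> g"] rep_carrier[of "t \<otimes> (g \<otimes> h)"]
      by (simp add: m_assoc inv_mult_cancel_left)
  qed
  then have "V (g \<otimes> h) = finprod PG (\<lambda>t. a t \<otimes>\<^bsub>PG\<^esub> (b \<circ> \<sigma>) t) transversal"
    unfolding V_def
    by (intro PG.finprod_cong')
      (use a b\<sigma> subgroup.m_closed[OF subgroup_P] in \<open>auto simp: Pi_iff\<close>)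
  also have "\<dots> = finprod PG a transversal \<otimes>\<^bsub>PG\<^esub> finprod PG (b \<circ> \<sigma>) transversal"
    by (rule PG.finprod_multf[OF a b\<sigma>])
  also have "finprod PG (b \<circ> \<sigma>) transversal = finprod PG b transversal"
    using PG.finprod_reindex[of b \<sigma> transversal] b \<sigma> by (simp add: bij_betw_def comp_def)
  finally show ?thesis unfolding V_def a_def b_def by simp
qed

lemma V_group_hom: "group_hom G PG V"
proof -
  have "group PG" using subgroup_imp_group[OF subgroup_P] .
  moreover have "V \<in> hom G PG" unfolding hom_def using V_closed V_mult by auto
  ultimately show ?thesis by (simp add: group_hom_def group_hom_axioms_def is_group)
qed

end

section \<open>Burnside's complement for a Sylow subgroup of prime order\<close>

locale prime_order_transfer = group G for G (structure) +
  fixes p :: nat and x :: 'a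
  assumes finite_G: "finite (carrier G)"
    and prime_p: "Factorial_Ring.prime p"
    and x_carrier: "x \<in> carrier G" and ord_x: "ord x = p"
    and smallest_prime: "\<And>r. Factorial_Ring.prime r \<Longrightarrow> r dvd order G \<Longrightarrow> p \<le> r"
    and not_sq: "\<not> p\<^sup>2 dvd order G"
begin

definition P :: "'a set" where
  "P = (\<lambda>i::nat. x [^] i) ` {..<p}"

lemma p_gt_1: "1 < p"
  using prime_gt_1_nat[OF prime_p] .

lemma x_pow_p: "x [^] p = \<one>"
  using pow_ord_eq_1[OF x_carrier] ord_x by simp

lemma x_pow_mod: "x [^] (n::nat) = x [^] (n mod p)"
proof -
  have "x [^] n = x [^] (n mod p) \<otimes> (x [^] p) [^] (n div p)"
    using x_carrier by (simp add: nat_pow_mult nat_pow_pow)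
  then show ?thesis using x_pow_p x_carrier by simp
qed

lemma x_pow_eq_iff: "x [^] (a::nat) = x [^] (b::nat) \<longleftrightarrow> [a = b] (mod p)"
proof
  have inj: "inj_on (\<lambda>i::nat. x [^] i) {..<p}"
    using ord_inj[OF x_carrier] ord_x p_gt_1 by (simp add: atLeast0AtMost lessThan_Suc_atMost[symmetric])
  assume "x [^] a = x [^] b"
  then have "x [^] (a mod p) = x [^] (b mod p)" using x_pow_mod by metis
  then show "[a = b] (mod p)"
    unfolding cong_def using inj_onD[OF inj] p_gt_1 by simp
next
  show "[a = b] (mod p) \<Longrightarrow> x [^] a = x [^] b"
    unfolding cong_def using x_pow_mod by metis
qed

lemma P_subgroup: "subgroup P G"
proof -
  have "{x [^] i | i. i \<in> {0 .. ord x - 1}} = P"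
    unfolding P_def ord_x using p_gt_1 by (auto simp: atLeast0AtMost lessThan_Suc_atMost[symmetric])
  then show ?thesis using element_generates_subgroup[OF finite_G x_carrier] by simp
qed

lemma x_mem_P: "x \<in> P"
  unfolding P_def using p_gt_1 x_carrier by (intro image_eqI[where x=1]) auto

lemma card_P: "card P = p"
  using x_pow_eq_iff unfolding P_def
  by (subst card_image) (auto simp: inj_on_def cong_def)

lemma comm_group_P: "comm_group (G\<lparr>carrier := P\<rparr>)"
proof -
  interpret PG: group "G\<lparr>carrier := P\<rparr>" using subgroup_imp_group P_subgroup by blast
  show ?thesis
  proof (rule PG.group_comm_groupI)
    fix a b assume "a \<in> carrier (G\<lparr>carrier := P\<rparr>)" "b \<in> carrier (G\<lparr>carrier := P\<rparr>)"
    then obtain i j where "a = x [^] (i::nat)" "b = x [^] (j::nat)" unfolding P_def by auto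
    then show "a \<otimes>\<^bsub>G\<lparr>carrier := P\<rparr>\<^esub> b = b \<otimes>\<^bsub>G\<lparr>carrier := P\<rparr>\<^esub> a"
      using x_carrier by (simp add: nat_pow_mult add.commute)
  qed
qed

sublocale transfer G P
  by (intro transfer.intro transfer_axioms.intro is_group finite_G P_subgroup comm_group_P)

lemma conj_mem_P_fixes:
  assumes t: "t \<in> carrier G" and conj: "t \<otimes> x \<otimes> inv t \<in> P"
  shows "t \<otimes> x \<otimes> inv t = x"
proof -
  obtain k where k: "t \<otimes> x \<otimes> inv t = x [^] (k::nat)" using conj unfolding P_def by auto
  have k_coprime: "\<not> p dvd k"
  proof
    assume "p dvd k"
    then have "t \<otimes> x \<otimes> inv t = \<one>" using k x_pow_mod[of k] by (simp add: dvd_eq_mod_eq_0)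
    then have "x = \<one>" using t x_carrier by (metis inv_closed m_closed inv_solve_right r_inv l_cancel_one)
    then show False using ord_x p_gt_1 by simp
  qed
  have k_pow: "[k ^ ord t = 1] (mod p)"
  proof -
    have "x [^] (k ^ ord t) = t [^] ord t \<otimes> x \<otimes> inv (t [^] ord t)"
      using conj_iterate[OF t x_carrier k] by simp
    also have "\<dots> = x [^] (1::nat)" using t x_carrier by simp
    finally show ?thesis using x_pow_eq_iff by blast
  qed
  have "[k = 1] (mod p)"
    using cong_1_if_pow_cong_1_coprime[OF prime_p k_coprime _ k_pow] ord_ge_1[OF finite_G t]
      coprime_ord_pred_smallest_prime[OF finite_G t prime_p smallest_prime] by simp
  then show ?thesis using k x_pow_eq_iff[of k 1] x_carrier by simp
qed

definition shift :: "'a \<Rightarrow> 'a" where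
  "shift t = rep (t \<otimes> x)"

lemma shift_iter:
  assumes t: "t \<in> transversal"
  shows "(shift ^^ i) t = rep (t \<otimes> x [^] i)"
proof (induction i)
  case 0
  then show ?case using t rep_transversal transversal_carrier by auto
next
  case (Suc i)
  have tc: "t \<in> carrier G" using t transversal_carrier by auto
  then have "rep (rep (t \<otimes> x [^] i) \<otimes> x) = rep (t \<otimes> x [^] Suc i)"
    using rep_mult_rep[of "t \<otimes> x [^] i" x] x_carrier by (simp add: m_assoc)
  then show ?case using Suc by (simp add: shift_def)
qed

lemma bij_betw_shift: "bij_betw shift transversal transversal"
  unfolding shift_def using bij_betw_rep_mult[OF x_carrier] .

lemma shift_maps_to: "shift ` transversal \<subseteq> transversal"
  using bij_betw_shift by (simp add: bij_betw_def)

lemma shift_period: "t \<in> transversal \<Longrightarrow> (shift ^^ p) t = t"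
  using shift_iter[of t p] x_pow_p rep_transversal transversal_carrier by auto

definition fixed :: "'a set" where
  "fixed = {t \<in> transversal. shift t = t}"

\<comment> \<open>Along a shift orbit the transfer factors telescope, with partial products rep (s x^i) (s x^i)^-1.\<close>
lemma transfer_factor_orbit_prod:
  assumes s: "s \<in> transversal"
  shows "finprod PG (\<lambda>i. transfer_factor x ((shift ^^ i) s)) {..<p} = \<one>"
proof -
  interpret PG: comm_group PG by (rule comm_group_P)
  have sc: "s \<in> carrier G" using s transversal_carrier by auto
  define c where "c = (\<lambda>i::nat. rep (s \<otimes> x [^] i) \<otimes> inv (s \<otimes> x [^] i))"
  have c: "c i \<in> carrier PG" for i
    unfolding c_def using rep_mult_inv_mem sc x_carrier by simp
  have a: "transfer_factor x ((shift ^^ i) s) \<in> carrier PG" for i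
    using funcset_mem[OF transfer_factor_PG[OF x_carrier] funpow_mem[OF shift_maps_to s]] .
  have "transfer_factor x ((shift ^^ i) s) \<otimes>\<^bsub>PG\<^esub> c (Suc i) = c i" for i
  proof -
    define r where "r = rep (s \<otimes> x [^] i)"
    have r: "r \<in> carrier G" unfolding r_def using rep_carrier sc x_carrier by simp
    have xi: "x [^] i \<in> carrier G" using x_carrier by simp
    have "rep (r \<otimes> x) = rep (s \<otimes> x [^] Suc i)"
      unfolding r_def using rep_mult_rep[of "s \<otimes> x [^] i" x] sc x_carrier by (simp add: m_assoc)
    moreover have "inv (s \<otimes> x [^] Suc i) = inv x \<otimes> inv (s \<otimes> x [^] i)"
      using sc x_carrier xi by (simp add: inv_mult_group m_assoc)
    ultimately show ?thesis
      unfolding transfer_factor_def c_def shift_iter[OF s] r_def[symmetric]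
      using r sc xi x_carrier rep_carrier[of "s \<otimes> x [^] Suc i"]
      by (simp add: m_assoc inv_mult_cancel_left mult_inv_cancel_left)
  qed
  then have "finprod PG (\<lambda>i. transfer_factor x ((shift ^^ i) s)) {..<p} \<otimes>\<^bsub>PG\<^esub> c p = c 0"
    by (rule PG.finprod_telescope[OF c a])
  moreover have "c 0 = \<one>" "c p = \<one>"
    unfolding c_def using sc x_pow_p rep_transversal[OF s] by simp_all
  moreover have "finprod PG (\<lambda>i. transfer_factor x ((shift ^^ i) s)) {..<p} \<in> carrier PG"
    by (intro PG.finprod_closed Pi_I a)
  ultimately show ?thesis using subgroup.mem_carrier[OF subgroup_P] by simp
qed

lemma nonfixed_orbits:
  "finprod PG (transfer_factor x) (transversal - fixed) = \<one> \<and> p dvd card (transversal - fixed)"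
proof -
  interpret PG: comm_group PG by (rule comm_group_P)
  have maps_to: "shift ` (transversal - fixed) \<subseteq> transversal - fixed"
  proof
    fix u assume "u \<in> shift ` (transversal - fixed)"
    then obtain t where t: "t \<in> transversal - fixed" and u: "u = shift t" by auto
    have t_transversal: "t \<in> transversal" and t_moved: "shift t \<noteq> t"
      using t unfolding fixed_def by auto
    have u_transversal: "u \<in> transversal" using u t_transversal shift_maps_to by auto
    have "shift u \<noteq> u"
      using inj_onD[OF bij_betw_imp_inj_on[OF bij_betw_shift] _ u_transversal t_transversal]
        t_moved u by auto
    then show "u \<in> transversal - fixed" using u_transversal unfolding fixed_def by auto
  qed
  have "finprod PG (transfer_factor x) (transversal - fixed) = \<one>\<^bsub>PG\<^esub> \<and>
      p dvd card (transversal - fixed)"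
  proof (rule PG.finprod_prime_orbits[OF prime_p _ maps_to])
    show "finite (transversal - fixed)" using finite_transversal by simp
    show "transfer_factor x \<in> transversal - fixed \<rightarrow> carrier PG"
      using transfer_factor_PG[OF x_carrier] by auto
    fix s assume s: "s \<in> transversal - fixed"
    then show "(shift ^^ p) s = s" using shift_period by simp
    show "shift s \<noteq> s" using s unfolding fixed_def by simp
    show "finprod PG (\<lambda>i. transfer_factor x ((shift ^^ i) s)) {..<p} = \<one>\<^bsub>PG\<^esub>"
      using s transfer_factor_orbit_prod by simp
  qed
  then show ?thesis by simp
qed

lemma transfer_factor_fixed:
  assumes "t \<in> fixed"
  shows "transfer_factor x t = x"
proof -
  have t: "t \<in> carrier G" and rep: "rep (t \<otimes> x) = t"
    using assms transversal_carrier unfolding fixed_def shift_def by auto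
  have "t \<otimes> x \<otimes> inv t \<in> P"
    using transfer_factor_mem[of "t \<otimes> x"] t x_carrier rep by simp
  then show ?thesis
    unfolding transfer_factor_def rep using conj_mem_P_fixes[OF t] by simp
qed

lemma V_x: "V x = x [^] card fixed"
proof -
  interpret PG: comm_group PG by (rule comm_group_P)
  have fixed: "fixed \<subseteq> transversal" unfolding fixed_def by auto
  have "finprod PG (transfer_factor x) fixed = finprod PG (\<lambda>_. x) fixed"
    using transfer_factor_fixed x_mem_P by (intro PG.finprod_cong') auto
  also have "\<dots> = x [^] card fixed"
    using PG.finprod_const[of x fixed] x_mem_P by (simp add: nat_pow_consistent[symmetric])
  finally have fixed_part: "finprod PG (transfer_factor x) fixed = x [^] card fixed" .
  have "V x = finprod PG (transfer_factor x) (fixed \<union> (transversal - fixed))"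
    unfolding V_def using fixed by (simp add: Un_absorb1)
  also have "\<dots> = finprod PG (transfer_factor x) fixed \<otimes>\<^bsub>PG\<^esub>
      finprod PG (transfer_factor x) (transversal - fixed)"
    using finite_transversal fixed transfer_factor_PG[OF x_carrier]
    by (intro PG.finprod_Un_disjoint) (auto simp: finite_subset)
  finally show ?thesis using fixed_part nonfixed_orbits x_carrier by simp
qed

lemma V_x_ne_one: "V x \<noteq> \<one>"
proof -
  have fixed: "fixed \<subseteq> transversal" unfolding fixed_def by auto
  have "\<not> p dvd card transversal"
  proof
    assume "p dvd card transversal"
    then have "p * p dvd card transversal * card P" using card_P by (simp add: mult_dvd_mono)
    then show False using card_transversal not_sq by (simp add: power2_eq_square)
  qed
  moreover have "card transversal = card fixed + card (transversal - fixed)"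
    using finite_transversal fixed card_Diff_subset[of fixed transversal]
      card_mono[of transversal fixed] by (simp add: finite_subset)
  ultimately have "\<not> p dvd card fixed" using nonfixed_orbits by (simp add: dvd_add_left_iff)
  then show ?thesis using V_x pow_eq_id[OF x_carrier] ord_x by simp
qed

lemma V_image: "V ` carrier G = P"
proof -
  interpret V: group_hom G PG V by (rule V_group_hom)
  have "card (rcosets\<^bsub>PG\<^esub> (V ` carrier G)) * card (V ` carrier G) = p"
    using group.lagrange[OF V.H.is_group V.img_is_subgroup] card_P by (simp add: order_def)
  then have dvd: "card (V ` carrier G) dvd p" by (metis dvd_triv_right)
  have "\<one> \<in> V ` carrier G" by (rule image_eqI[of _ _ \<one>]) simp_all
  then have "card {\<one>, V x} \<le> card (V ` carrier G)"
    using x_carrier finite_carrier by (intro card_mono) auto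
  then have "2 \<le> card (V ` carrier G)" using V_x_ne_one by simp
  with dvd have "card (V ` carrier G) = card P"
    using prime_p card_P by (auto simp: prime_nat_iff)
  moreover have "V ` carrier G \<subseteq> P" using V_closed by auto
  ultimately show ?thesis
    using card_subset_eq finite_subset[OF P_carrier finite_carrier] by metis
qed

lemma card_kernel_V: "card (kernel G PG V) * p = order G"
proof -
  interpret V: group_hom G PG V by (rule V_group_hom)
  have "G Mod kernel G PG V \<cong> PG" using V.FactGroup_iso V_image by simp
  then have "card (rcosets (kernel G PG V)) = p"
    using iso_same_card card_P by (fastforce simp: FactGroup_def)
  then show ?thesis using lagrange[OF V.subgroup_kernel] by (simp add: mult.commute)
qed

lemma kernel_V: "kernel G PG V = {g \<in> carrier G. g [^] (order G div p) = \<one>}"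
proof -
  interpret V: group_hom G PG V by (rule V_group_hom)
  define K where "K = kernel G PG V"
  have K: "subgroup K G" unfolding K_def by (rule V.subgroup_kernel)
  have card_K: "card K = order G div p"
    using card_kernel_V p_gt_1 unfolding K_def
    by (metis nonzero_mult_div_cancel_right not_one_less_zero)
  have not_dvd: "\<not> p dvd order G div p"
  proof
    assume "p dvd order G div p"
    then have "p * p dvd card K * p" using card_K by (simp add: mult_dvd_mono)
    then show False using card_kernel_V not_sq unfolding K_def by (simp add: power2_eq_square)
  qed
  show ?thesis
    unfolding K_def[symmetric]
  proof (intro equalityI subsetI)
    fix g assume g: "g \<in> K"
    have "finite K" using finite_subset[OF subgroup.subset[OF K] finite_carrier] .
    then show "g \<in> {g \<in> carrier G. g [^] (order G div p) = \<one>}"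
      using subgroup_nat_pow_card[OF K _ g] card_K g subgroup.subset[OF K] by auto
  next
    fix g assume "g \<in> {g \<in> carrier G. g [^] (order G div p) = \<one>}"
    then have g: "g \<in> carrier G" and g_pow: "g [^] (order G div p) = \<one>" by auto
    have Vg: "V g \<in> carrier G" using V_closed[OF g] P_carrier by auto
    have "V g [^] (order G div p) = \<one>"
      using V.hom_nat_pow[OF g, of "order G div p"] g_pow
      by (simp add: nat_pow_consistent[symmetric])
    moreover have "V g [^] p = \<one>"
      using subgroup_nat_pow_card[OF P_subgroup _ V_closed[OF g]] card_P
        finite_subset[OF P_carrier finite_carrier] by simp
    ultimately have "ord (V g) = 1"
      using coprime_common_divisor_nat[of p "order G div p" "ord (V g)"]
        prime_imp_coprime_nat[OF prime_p not_dvd] pow_eq_id[OF Vg] by simp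
    then show "g \<in> K" unfolding K_def kernel_def using g ord_eq_1[OF Vg] by simp
  qed
qed

end

lemma (in group) exists_ord_eq_prime:
  assumes fin: "finite (carrier G)" and p: "Factorial_Ring.prime p" and dvd: "p dvd order G"
  obtains y where "y \<in> carrier G" "ord y = p"
proof -
  obtain H where H: "subgroup H G" "card H = p"
    using sylow_thm[OF p is_group _ fin, of 1 "order G div p"] dvd by auto
  have "H \<noteq> {\<one>}" using H(2) prime_gt_1_nat[OF p] by auto
  then obtain y where y: "y \<in> H" "y \<noteq> \<one>" using subgroup.one_closed[OF H(1)] by blast
  have yG: "y \<in> carrier G" using y H subgroup.subset by blast
  have "y [^] p = \<one>"
    using subgroup_nat_pow_card[OF H(1) _ y(1)] H(2) finite_subset[OF subgroup.subset[OF H(1)] fin]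
    by simp
  then have "ord y dvd p" using pow_eq_id[OF yG] by simp
  moreover have "ord y \<noteq> 1" using ord_eq_1[OF yG] y by simp
  ultimately have "ord y = p" using p prime_nat_iff by auto
  with yG that show ?thesis by blast
qed

theorem (in group) burnside_complement:
  assumes fin: "finite (carrier G)" and p: "Factorial_Ring.prime p" and dvd: "p dvd order G"
    and not_sq: "\<not> p\<^sup>2 dvd order G"
    and smallest: "\<And>r. Factorial_Ring.prime r \<Longrightarrow> r dvd order G \<Longrightarrow> p \<le> r"
  shows "subgroup {g \<in> carrier G. g [^] (order G div p) = \<one>} G"
    and "card {g \<in> carrier G. g [^] (order G div p) = \<one>} * p = order G"
proof -
  obtain y where "y \<in> carrier G" "ord y = p"
    using exists_ord_eq_prime[OF fin p dvd] .
  then interpret prime_order_transfer G p y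
    using fin p not_sq smallest by unfold_locales auto
  show "subgroup {g \<in> carrier G. g [^] (order G div p) = \<one>} G"
    using group_hom.subgroup_kernel[OF V_group_hom] kernel_V by simp
  show "card {g \<in> carrier G. g [^] (order G div p) = \<one>} * p = order G"
    using card_kernel_V kernel_V by simp
qed

lemma (in group) burnside_complement_subgroup:
  assumes J: "subgroup J G" "finite J" and p: "Factorial_Ring.prime p" and dvd: "p dvd card J"
    and not_sq: "\<not> p\<^sup>2 dvd card J"
    and smallest: "\<And>r. Factorial_Ring.prime r \<Longrightarrow> r dvd card J \<Longrightarrow> p \<le> r"
  shows "subgroup {g \<in> J. g [^] (card J div p) = \<one>} G"
    and "card {g \<in> J. g [^] (card J div p) = \<one>} * p = card J"
proof -
  interpret J: group "G\<lparr>carrier := J\<rparr>" using subgroup_imp_group[OF J(1)] .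
  have order: "order (G\<lparr>carrier := J\<rparr>) = card J" by (simp add: order_def)
  note complement = J.burnside_complement[unfolded order, OF _ p dvd not_sq smallest]
  show "subgroup {g \<in> J. g [^] (card J div p) = \<one>} G"
    using incl_subgroup[OF J(1) complement(1)] J(2) by (simp add: nat_pow_consistent[symmetric])
  show "card {g \<in> J. g [^] (card J div p) = \<one>} * p = card J"
    using complement(2) J(2) by (simp add: nat_pow_consistent[symmetric])
qed

section \<open>Braces of square-free order\<close>

lemma smallest_prime_divisor:
  fixes n :: nat
  assumes "n \<noteq> 1"
  shows "\<exists>p. Factorial_Ring.prime p \<and> p dvd n \<and>
    (\<forall>r. Factorial_Ring.prime r \<and> r dvd n \<longrightarrow> p \<le> r)"
proof -
  define p where "p = (LEAST r. Factorial_Ring.prime r \<and> r dvd n)"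
  have "\<exists>r. Factorial_Ring.prime r \<and> r dvd n" using prime_factor_nat[OF assms] by blast
  then have "Factorial_Ring.prime p \<and> p dvd n" unfolding p_def by (rule LeastI_ex)
  moreover have "\<forall>r. Factorial_Ring.prime r \<and> r dvd n \<longrightarrow> p \<le> r"
    unfolding p_def by (auto intro: Least_le)
  ultimately show ?thesis by blast
qed

definition prime_factor_series :: "'a monoid \<Rightarrow> 'a monoid \<Rightarrow> (nat \<Rightarrow> 'a set) \<Rightarrow> nat \<Rightarrow> bool" where
  "prime_factor_series A M I n \<longleftrightarrow> I 0 = {\<one>\<^bsub>A\<^esub>} \<and> (\<forall>i\<le>n. brace_ideal A M (I i)) \<and>
     (\<forall>i<n. I i \<subseteq> I (Suc i) \<and> Factorial_Ring.prime (card (brace_factor A (I i) (I (Suc i)))))"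

lemma prime_factor_series_snoc:
  assumes I: "prime_factor_series A M I n" and J: "brace_ideal A M J" "I n \<subseteq> J"
    "Factorial_Ring.prime (card (brace_factor A (I n) J))"
  shows "prime_factor_series A M (I(Suc n := J)) (Suc n)"
  unfolding prime_factor_series_def
proof (intro conjI allI impI)
  show "(I(Suc n := J)) 0 = {\<one>\<^bsub>A\<^esub>}" using I unfolding prime_factor_series_def by simp
  show "brace_ideal A M ((I(Suc n := J)) i)" if "i \<le> Suc n" for i
    using I J that unfolding prime_factor_series_def by (cases "i = Suc n") auto
  show "(I(Suc n := J)) i \<subseteq> (I(Suc n := J)) (Suc i)"
    "Factorial_Ring.prime (card (brace_factor A ((I(Suc n := J)) i) ((I(Suc n := J)) (Suc i))))"
    if "i < Suc n" for i
    using I J that unfolding prime_factor_series_def by (cases "i = n"; simp)+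
qed

lemma supersoluble_brace_if_prime_factor_series:
  assumes "prime_factor_series A M I n" "I n = carrier A"
  shows "supersoluble_brace A M"
  using assms unfolding prime_factor_series_def supersoluble_brace_def
  by (intro exI[of _ I] exI[of _ n]) simp

locale skew_brace =
  fixes A M :: "'a monoid"
  assumes brace: "brace A M"
begin

sublocale A: group A using brace unfolding brace_def by simp

sublocale M: group M using brace unfolding brace_def by simp

lemma carrier_M: "carrier M = carrier A"
  using brace unfolding brace_def by simp

lemma brace_distrib:
  "\<lbrakk>a \<in> carrier A; b \<in> carrier A; c \<in> carrier A\<rbrakk> \<Longrightarrow>
    a \<otimes>\<^bsub>M\<^esub> (b \<otimes>\<^bsub>A\<^esub> c) = (a \<otimes>\<^bsub>M\<^esub> b) \<otimes>\<^bsub>A\<^esub> inv\<^bsub>A\<^esub> a \<otimes>\<^bsub>A\<^esub> (a \<otimes>\<^bsub>M\<^esub> c)"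
  using brace unfolding brace_def by simp

lemma mult_closed: "\<lbrakk>a \<in> carrier A; b \<in> carrier A\<rbrakk> \<Longrightarrow> a \<otimes>\<^bsub>M\<^esub> b \<in> carrier A"
  using M.m_closed carrier_M by simp

lemma one_M: "\<one>\<^bsub>M\<^esub> = \<one>\<^bsub>A\<^esub>"
proof -
  have one: "\<one>\<^bsub>M\<^esub> \<in> carrier A" using carrier_M by auto
  have "\<one>\<^bsub>A\<^esub> = \<one>\<^bsub>M\<^esub> \<otimes>\<^bsub>M\<^esub> (\<one>\<^bsub>A\<^esub> \<otimes>\<^bsub>A\<^esub> \<one>\<^bsub>A\<^esub>)"
    using carrier_M by simp
  also have "\<dots> = \<one>\<^bsub>A\<^esub> \<otimes>\<^bsub>A\<^esub> inv\<^bsub>A\<^esub> \<one>\<^bsub>M\<^esub> \<otimes>\<^bsub>A\<^esub> \<one>\<^bsub>A\<^esub>"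
    using brace_distrib[OF one A.one_closed A.one_closed] carrier_M by simp
  finally have "\<one>\<^bsub>A\<^esub> = inv\<^bsub>A\<^esub> \<one>\<^bsub>M\<^esub>" using one by simp
  then show ?thesis by (metis A.inv_inv[OF one] A.inv_one)
qed

lemma lambda_closed: "\<lbrakk>a \<in> carrier A; b \<in> carrier A\<rbrakk> \<Longrightarrow> brace_lambda A M a b \<in> carrier A"
  unfolding brace_lambda_def using mult_closed by simp

lemma mult_eq_lambda:
  "\<lbrakk>a \<in> carrier A; b \<in> carrier A\<rbrakk> \<Longrightarrow> a \<otimes>\<^bsub>M\<^esub> b = a \<otimes>\<^bsub>A\<^esub> brace_lambda A M a b"
  unfolding brace_lambda_def using A.mult_inv_cancel_left mult_closed by simp

lemma lambda_mult:
  assumes "a \<in> carrier A" "u \<in> carrier A" "v \<in> carrier A"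
  shows "brace_lambda A M a (u \<otimes>\<^bsub>A\<^esub> v) = brace_lambda A M a u \<otimes>\<^bsub>A\<^esub> brace_lambda A M a v"
  unfolding brace_lambda_def brace_distrib[OF assms]
  using assms mult_closed by (simp add: A.m_assoc)

lemma lambda_one: "a \<in> carrier A \<Longrightarrow> brace_lambda A M a \<one>\<^bsub>A\<^esub> = \<one>\<^bsub>A\<^esub>"
  unfolding brace_lambda_def using carrier_M one_M[symmetric] M.r_one by simp

lemma lambda_nat_pow:
  assumes "a \<in> carrier A" "u \<in> carrier A"
  shows "brace_lambda A M a (u [^]\<^bsub>A\<^esub> (n::nat)) = brace_lambda A M a u [^]\<^bsub>A\<^esub> n"
  by (induction n) (simp_all add: assms lambda_one lambda_mult)

lemma brace_ideal_lambda_pow_eq_one: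
  assumes J: "brace_ideal A M J" and b: "b \<in> carrier A"
    and y: "y \<in> J" "y [^]\<^bsub>A\<^esub> (m::nat) = \<one>\<^bsub>A\<^esub>"
  shows "brace_lambda A M b y \<in> J" and "brace_lambda A M b y [^]\<^bsub>A\<^esub> m = \<one>\<^bsub>A\<^esub>"
proof -
  show "brace_lambda A M b y \<in> J" using J b y(1) unfolding brace_ideal_def by blast
  have "y \<in> carrier A" using J y(1) subgroup.subset unfolding brace_ideal_def by blast
  then show "brace_lambda A M b y [^]\<^bsub>A\<^esub> m = \<one>\<^bsub>A\<^esub>"
    using lambda_nat_pow[OF b, of y m] y(2) lambda_one[OF b] by simp
qed

lemma brace_ideal_carrier: "brace_ideal A M (carrier A)"
  unfolding brace_ideal_def
  using A.subgroup_self A.normal_self M.subgroup_self M.normal_self carrier_M lambda_closed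
  by simp

end

locale finite_skew_brace = skew_brace +
  assumes finite_carrier: "finite (carrier A)"
begin

lemma brace_ideal_pow_eq_one:
  assumes J: "brace_ideal A M J"
    and K_def: "K = {g \<in> J. g [^]\<^bsub>A\<^esub> (m::nat) = \<one>\<^bsub>A\<^esub>}" and K_A: "subgroup K A"
    and card_K: "card K = m" and card_KM: "card {g \<in> J. g [^]\<^bsub>M\<^esub> m = \<one>\<^bsub>M\<^esub>} = m"
  shows "brace_ideal A M K"
proof -
  have J_A: "J \<lhd> A" and J_M: "J \<lhd> M" and J_carrier: "J \<subseteq> carrier A"
    using J subgroup.subset unfolding brace_ideal_def by auto
  have K_carrier: "K \<subseteq> carrier A" using subgroup.subset[OF K_A] .
  have lambda_K: "brace_lambda A M b y \<in> K" if "b \<in> carrier A" "y \<in> K" for b y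
    using brace_ideal_lambda_pow_eq_one[OF J that(1)] that(2) unfolding K_def by blast
  have K_M: "subgroup K M"
  proof (rule M.finite_subgroupI)
    show "finite (carrier M)" using finite_carrier carrier_M by simp
    show "K \<subseteq> carrier M" using K_carrier carrier_M by simp
    show "\<one>\<^bsub>M\<^esub> \<in> K" using subgroup.one_closed[OF K_A] one_M by simp
    fix a b assume a: "a \<in> K" and b: "b \<in> K"
    have "a \<otimes>\<^bsub>M\<^esub> b = a \<otimes>\<^bsub>A\<^esub> brace_lambda A M a b"
      using a b K_carrier by (intro mult_eq_lambda) auto
    also have "\<dots> \<in> K"
      using subgroup.m_closed[OF K_A a lambda_K] a b K_carrier by auto
    finally show "a \<otimes>\<^bsub>M\<^esub> b \<in> K" .
  qed
  define KM where "KM = {g \<in> J. g [^]\<^bsub>M\<^esub> m = \<one>\<^bsub>M\<^esub>}"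
  have "K \<subseteq> KM"
  proof
    fix g assume g: "g \<in> K"
    have "finite K" using finite_subset[OF K_carrier finite_carrier] .
    then show "g \<in> KM"
      using M.subgroup_nat_pow_card[OF K_M _ g] card_K g unfolding KM_def K_def by simp
  qed
  moreover have "finite KM" using finite_subset[OF _ finite_carrier] J_carrier unfolding KM_def by auto
  ultimately have K_eq: "K = KM"
    using card_subset_eq[of KM K] card_K card_KM unfolding KM_def by simp
  have "K \<lhd> A" by (rule A.pow_eq_one_normal[OF J_A K_A K_def])
  moreover have "K \<lhd> M" using M.pow_eq_one_normal[OF J_M K_M] K_eq unfolding KM_def by simp
  ultimately show ?thesis unfolding brace_ideal_def using K_A K_M lambda_K by blast
qed

lemma brace_ideal_prime_step:
  assumes J: "brace_ideal A M J" and sqf: "squarefree (card J)" and ne: "J \<noteq> {\<one>\<^bsub>A\<^esub>}"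
  obtains K p where "brace_ideal A M K" "K \<subseteq> J" "Factorial_Ring.prime p"
    "card (brace_factor A K J) = p" "card K * p = card J"
proof -
  have J_A: "subgroup J A" and J_M: "subgroup J M" using J unfolding brace_ideal_def by auto
  have fin: "finite J" using finite_subset[OF subgroup.subset[OF J_A] finite_carrier] .
  have "card J \<noteq> 1"
    using ne subgroup.one_closed[OF J_A] by (auto simp: card_1_singleton_iff)
  then obtain p where p: "Factorial_Ring.prime p" "p dvd card J"
    and smallest: "\<And>r. Factorial_Ring.prime r \<Longrightarrow> r dvd card J \<Longrightarrow> p \<le> r"
    using smallest_prime_divisor by blast
  have not_sq: "\<not> p\<^sup>2 dvd card J"
    using sqf p(1) unfolding squarefree_def by (auto dest: not_prime_unit)
  define K where "K = {g \<in> J. g [^]\<^bsub>A\<^esub> (card J div p) = \<one>\<^bsub>A\<^esub>}"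
  note A_complement = A.burnside_complement_subgroup[OF J_A fin p not_sq smallest, folded K_def]
  note M_complement = M.burnside_complement_subgroup[OF J_M fin p not_sq smallest]
  have div_p: "c = card J div p" if "c * p = card J" for c
    using prime_gt_0_nat[OF p(1)] by (simp add: that[symmetric])
  have card_K: "card K = card J div p" using div_p[OF A_complement(2)] .
  have "card {g \<in> J. g [^]\<^bsub>M\<^esub> (card J div p) = \<one>\<^bsub>M\<^esub>} = card J div p"
    using div_p[OF M_complement(2)] .
  then have ideal: "brace_ideal A M K"
    using brace_ideal_pow_eq_one[OF J K_def A_complement(1) card_K] by simp
  have "K \<subseteq> J" unfolding K_def by auto
  moreover have "card (brace_factor A K J) = p"
  proof -
    have "card J \<noteq> 0" using fin subgroup.one_closed[OF J_A] by auto
    then have "card K \<noteq> 0" using A_complement(2) by (metis mult_zero_left)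
    moreover have "card (brace_factor A K J) * card K = card K * p"
      using A.card_rcosets_mult_card[OF A_complement(1) J_A \<open>K \<subseteq> J\<close>] A_complement(2)
      unfolding brace_factor_def by simp
    ultimately show ?thesis by simp
  qed
  ultimately show ?thesis using that[OF ideal _ p(1) _ A_complement(2)] by blast
qed

lemma prime_factor_series_ending_at:
  "brace_ideal A M J \<Longrightarrow> squarefree (card J) \<Longrightarrow> \<exists>I n. prime_factor_series A M I n \<and> I n = J"
proof (induction "card J" arbitrary: J rule: less_induct)
  case less
  show ?case
  proof (cases "J = {\<one>\<^bsub>A\<^esub>}")
    case True
    then have "prime_factor_series A M (\<lambda>_. J) 0"
      using less.prems(1) unfolding prime_factor_series_def by simp
    then show ?thesis by blast
  next
    case False
    obtain K p where K: "brace_ideal A M K" "K \<subseteq> J" "Factorial_Ring.prime p"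
      "card (brace_factor A K J) = p" "card K * p = card J"
      using brace_ideal_prime_step[OF less.prems False] .
    have J_A: "subgroup J A" using less.prems(1) unfolding brace_ideal_def by simp
    have "card J \<noteq> 0"
      using subgroup.one_closed[OF J_A] finite_subset[OF subgroup.subset[OF J_A] finite_carrier]
      by auto
    then have "card K \<noteq> 0" unfolding K(5)[symmetric] by simp
    then have "card K * 1 < card K * p" using prime_gt_1_nat[OF K(3)] by simp
    then have "card K < card J" using K(5) by simp
    moreover have "squarefree (card K)"
      by (rule squarefree_mono[OF _ less.prems(2)]) (simp add: K(5)[symmetric])
    ultimately obtain I n where I: "prime_factor_series A M I n" "I n = K"
      using less.hyps K(1) by blast
    have "prime_factor_series A M (I(Suc n := J)) (Suc n)"
      by (rule prime_factor_series_snoc[OF I(1) less.prems(1)]) (use I K in simp_all)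
    then show ?thesis by (intro exI[of _ "I(Suc n := J)"] exI[of _ "Suc n"]) simp
  qed
qed

end

theorem corollary3p9:
  fixes A M :: "'a monoid"
  assumes "brace A M"
    and "finite (carrier A)"
    and "squarefree (card (carrier A))"
  shows "supersoluble_brace A M"
proof -
  interpret finite_skew_brace A M
    using assms(1,2) by (simp add: finite_skew_brace_def finite_skew_brace_axioms_def skew_brace_def)
  obtain I n where "prime_factor_series A M I n" "I n = carrier A"
    using prime_factor_series_ending_at[OF brace_ideal_carrier assms(3)] by blast
  then show ?thesis by (rule supersoluble_brace_if_prime_factor_series)
qed

end
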